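(* There is an absolute constant $c>0$ such that for every max game $\mathcal R$ on a graph with $n\ge2$ nodes, the price of anarchy satisfies $PoA\le c\,(L+\log n)$; that is, $PoA=O(L+\log n)$.
   Context: A routing game $(\mathbf N,G,\mathcal P)$: players $\{1,\dots,N\}$ ($N\ge1$), a simple graph $G$ with $n$ nodes, and for each player $i$ a nonempty finite set $\mathcal P_i$ of paths from $u_i$ to $v_i$; $L=\max_{p\in\bigcup_i\mathcal P_i}|p|$ (path length = number of edges). A routing is $\mathbf p=[p_1,\dots,p_N]$, $p_i\in\mathcal P_i$. $C_e(\mathbf p)$ = number of players whose path uses edge $e$; $C_i(\mathbf p)=\max_{e\in p_i}C_e(\mathbf p)$; $D_i(\mathbf p)=|p_i|$; $C(\mathbf p)=\max_eC_e(\mathbf p)$; $D(\mathbf p)=\max_i|p_i|$. Max game: player cost $pc_i=\max(C_i,D_i)$, social cost $SC=\max(C,D)$. A Nash-routing is one where no player can strictly lower $pc_i$ by unilaterally changing its path within $\mathcal P_i$. With $SC^*$ the minimum social cost over all routings and $\mathbf P$ the (nonempty) set of Nash-routings, $PoA=\sup_{\mathbf p\in\mathbf P}SC(\mathbf p)/SC^*$. *)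

theory Defs
  imports Complex_Main "HOL-Library.FuncSet"
begin

(* Graph: nodes are 0..<n, E is a set of undirected edges (2-element sets).
   Players are 0..<N.  A path is a nonempty list of distinct nodes, consecutive
   nodes being adjacent. *)

definition simple_graph :: "nat \<Rightarrow> nat set set \<Rightarrow> bool" where
  "simple_graph n E \<longleftrightarrow> (\<forall>e\<in>E. \<exists>a b. a \<noteq> b \<and> a < n \<and> b < n \<and> e = {a, b})"

definition path_edges :: "nat list \<Rightarrow> nat set set" where
  "path_edges xs = set (map (\<lambda>(a, b). {a, b}) (zip xs (tl xs)))"

definition plen :: "nat list \<Rightarrow> nat" where
  "plen xs = length xs - 1"

definition is_path :: "nat set set \<Rightarrow> nat \<Rightarrow> nat \<Rightarrow> nat list \<Rightarrow> bool" where
  "is_path E u v xs \<longleftrightarrow> xs \<noteq> [] \<and> hd xs = u \<and> last xs = v \<and> distinct xs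
     \<and> path_edges xs \<subseteq> E"

definition routing_game ::
  "nat \<Rightarrow> nat set set \<Rightarrow> nat \<Rightarrow> (nat \<Rightarrow> nat) \<Rightarrow> (nat \<Rightarrow> nat) \<Rightarrow> (nat \<Rightarrow> nat list set) \<Rightarrow> bool" where
  "routing_game n E N u v P \<longleftrightarrow> simple_graph n E \<and> N \<ge> 1 \<and>
     (\<forall>i<N. finite (P i) \<and> P i \<noteq> {} \<and> (\<forall>p\<in>P i. is_path E (u i) (v i) p))"

definition Lmax :: "nat \<Rightarrow> (nat \<Rightarrow> nat list set) \<Rightarrow> nat" where
  "Lmax N P = Max (plen ` (\<Union>i<N. P i))"

definition routings :: "nat \<Rightarrow> (nat \<Rightarrow> nat list set) \<Rightarrow> (nat \<Rightarrow> nat list) set" where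
  "routings N P = PiE {..<N} P"

definition edge_cong :: "nat \<Rightarrow> (nat \<Rightarrow> nat list) \<Rightarrow> nat set \<Rightarrow> nat" where
  "edge_cong N r e = card {i. i < N \<and> e \<in> path_edges (r i)}"

definition player_cong :: "nat \<Rightarrow> (nat \<Rightarrow> nat list) \<Rightarrow> nat \<Rightarrow> nat" where
  "player_cong N r i = Max (insert 0 (edge_cong N r ` path_edges (r i)))"

definition player_cost :: "nat \<Rightarrow> (nat \<Rightarrow> nat list) \<Rightarrow> nat \<Rightarrow> nat" where
  "player_cost N r i = max (player_cong N r i) (plen (r i))"

definition congestion :: "nat \<Rightarrow> nat set set \<Rightarrow> (nat \<Rightarrow> nat list) \<Rightarrow> nat" where
  "congestion N E r = Max (insert 0 (edge_cong N r ` E))"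

definition dilation :: "nat \<Rightarrow> (nat \<Rightarrow> nat list) \<Rightarrow> nat" where
  "dilation N r = Max (insert 0 ((\<lambda>i. plen (r i)) ` {..<N}))"

definition social_cost :: "nat \<Rightarrow> nat set set \<Rightarrow> (nat \<Rightarrow> nat list) \<Rightarrow> nat" where
  "social_cost N E r = max (congestion N E r) (dilation N r)"

definition opt_social_cost :: "nat \<Rightarrow> nat set set \<Rightarrow> (nat \<Rightarrow> nat list set) \<Rightarrow> nat" where
  "opt_social_cost N E P = Min (social_cost N E ` routings N P)"

definition nash_routings :: "nat \<Rightarrow> (nat \<Rightarrow> nat list set) \<Rightarrow> (nat \<Rightarrow> nat list) set" where
  "nash_routings N P = {r \<in> routings N P.
     \<forall>i<N. \<forall>q\<in>P i. player_cost N r i \<le> player_cost N (r(i := q)) i}"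

end

theory Submission
  imports Defs
begin

(* Fix a Nash routing r and an optimal routing s; let C be the congestion of r.
   For a threshold t call an edge heavy if at least t players of r use it.
   (1) Double counting: t * #(edges of load >= t) <= L * #(players using such an edge).
   (2) Nash condition: for t > L, a player meeting an edge of load >= t could switch
       to its optimal path s_i, which has length <= L; since it does not profit, s_i
       contains an edge of load >= t - 1 under r.  Every such edge serves at most
       C(s) <= OPT players of s, so #players <= C(s) * #(edges of load >= t - 1).
   Together, above T = L + 2 L C(s) the number of heavy edges at least doubles when
   the threshold drops by one; as there are at most n^2 edges, C <= T + 4 ln n.
   Since the dilation of r is at most L and OPT >= 1 unless all paths are trivial,
   the social cost of r is at most 4 (L + ln n) OPT. *)

(* A simple graph on n nodes has at most n^2 edges (needed for the logarithmic term). *)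
lemma simple_graph_finite_edges:
  assumes "simple_graph n E"
  shows "finite E" and "card E \<le> n ^ 2"
proof -
  let ?F = "(\<lambda>(a, b). {a, b}) ` ({..<n} \<times> {..<n})"
  have sub: "E \<subseteq> ?F"
    using assms unfolding simple_graph_def by force
  show "finite E" using sub by (rule finite_subset) simp
  have "card E \<le> card ?F" using sub by (intro card_mono) simp_all
  also have "\<dots> \<le> card ({..<n} \<times> {..<n})" by (rule card_image_le) simp
  finally show "card E \<le> n ^ 2" by (simp add: power2_eq_square)
qed

lemma finite_path_edges: "finite (path_edges xs)"
  unfolding path_edges_def by simp

lemma card_path_edges_le_plen: "card (path_edges xs) \<le> plen xs"
proof -
  have "card (path_edges xs) \<le> length (map (\<lambda>(a, b). {a, b}) (zip xs (tl xs)))"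
    unfolding path_edges_def by (rule card_length)
  then show ?thesis unfolding plen_def by simp
qed

lemma is_path_plen_pos:
  assumes "is_path E a b p" and "a \<noteq> b"
  shows "1 \<le> plen p"
  using assms by (cases p) (auto simp: is_path_def plen_def Suc_le_eq split: if_splits)

lemma is_path_endpoints_distinct:
  assumes "is_path E a b p" and "1 \<le> plen p"
  shows "a \<noteq> b"
proof (cases p)
  case (Cons x ys)
  with assms have "ys \<noteq> []" by (auto simp: plen_def)
  with Cons assms show ?thesis by (auto simp: is_path_def)
qed (use assms in \<open>simp add: is_path_def\<close>)

lemma edge_cong_update_le: "edge_cong N (r(i := q)) e \<le> Suc (edge_cong N r e)"
proof -
  have "{j. j < N \<and> e \<in> path_edges ((r(i := q)) j)}
          \<subseteq> insert i {j. j < N \<and> e \<in> path_edges (r j)}"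
    by auto
  then have "card {j. j < N \<and> e \<in> path_edges ((r(i := q)) j)}
               \<le> card (insert i {j. j < N \<and> e \<in> path_edges (r j)})"
    by (intro card_mono) auto
  also have "\<dots> \<le> Suc (card {j. j < N \<and> e \<in> path_edges (r j)})"
    by (simp add: card_insert_le_m1)
  finally show ?thesis unfolding edge_cong_def .
qed

lemma edge_cong_le_player_cong:
  "e \<in> path_edges (r i) \<Longrightarrow> edge_cong N r e \<le> player_cong N r i"
  unfolding player_cong_def by (simp add: finite_path_edges)

lemma player_cong_attained:
  assumes "0 < player_cong N r i"
  obtains e where "e \<in> path_edges (r i)" and "edge_cong N r e = player_cong N r i"
proof -
  have "player_cong N r i \<in> insert 0 (edge_cong N r ` path_edges (r i))"
    unfolding player_cong_def by (rule Max_in) (simp_all add: finite_path_edges)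
  with assms that show ?thesis by auto
qed

lemma sum_edge_cong:
  assumes "finite A"
  shows "(\<Sum>e\<in>A. edge_cong N r e) = (\<Sum>i<N. card (path_edges (r i) \<inter> A))"
proof -
  have "(\<Sum>e\<in>A. edge_cong N r e) = (\<Sum>e\<in>A. \<Sum>i<N. if e \<in> path_edges (r i) then 1 else 0)"
    unfolding edge_cong_def by (simp add: sum.If_cases Int_def)
  also have "\<dots> = (\<Sum>i<N. \<Sum>e\<in>A. if e \<in> path_edges (r i) then 1 else 0)"
    by (rule sum.swap)
  also have "\<dots> = (\<Sum>i<N. card (path_edges (r i) \<inter> A))"
    using assms by (simp add: sum.If_cases Int_commute)
  finally show ?thesis .
qed

section \<open>A doubling chain is short\<close>

lemma doubling_chain_bound:
  fixes f :: "nat \<Rightarrow> nat"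
  assumes start: "1 \<le> f C"
    and doubling: "\<And>t. T < t \<Longrightarrow> 2 * f t \<le> f (t - 1)"
    and bounded: "\<And>t. f t \<le> M"
  shows "2 ^ (C - T) \<le> M"
proof -
  have chain: "2 ^ k \<le> f (C - k)" if "k \<le> C - T" for k
    using that
  proof (induction k)
    case 0
    then show ?case using start by simp
  next
    case (Suc k)
    then have "2 ^ Suc k \<le> 2 * f (C - k)" by simp
    also have "\<dots> \<le> f (C - k - 1)" using Suc.prems by (intro doubling) linarith
    also have "C - k - 1 = C - Suc k" by simp
    finally show ?case .
  qed
  have "2 ^ (C - T) \<le> f (C - (C - T))" by (rule chain) simp
  also have "\<dots> \<le> M" by (rule bounded)
  finally show ?thesis .
qed

lemma ln_2_ge_half: "1 / 2 \<le> ln (2::real)"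
proof -
  have "exp (1 / 2::real) ^ 2 = exp 1" by (simp add: power2_eq_square flip: exp_add)
  also have "\<dots> \<le> 2 ^ 2" using exp_le by simp
  finally have "exp (1 / 2::real) \<le> 2" by (rule power2_le_imp_le) simp
  then have "ln (exp (1 / 2::real)) \<le> ln 2" by (subst ln_le_cancel_iff) auto
  then show ?thesis by simp
qed

lemma exponent_le_ln:
  assumes "2 ^ k \<le> n ^ 2" and "1 \<le> n"
  shows "real k \<le> 4 * ln (real n)"
proof -
  have "(2::real) ^ k \<le> real n ^ 2"
    using assms(1) by (metis of_nat_le_iff of_nat_numeral of_nat_power)
  then have "ln ((2::real) ^ k) \<le> ln (real n ^ 2)"
    using assms(2) by (subst ln_le_cancel_iff) simp_all
  then have "real k * ln 2 \<le> 2 * ln (real n)"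
    using assms(2) by (simp add: ln_realpow)
  moreover have "real k * (1 / 2) \<le> real k * ln 2"
    using ln_2_ge_half by (intro mult_left_mono) auto
  ultimately show ?thesis by linarith
qed

definition heavy_edges :: "nat \<Rightarrow> nat set set \<Rightarrow> (nat \<Rightarrow> nat list) \<Rightarrow> nat \<Rightarrow> nat set set" where
  "heavy_edges N E r t = {e \<in> E. t \<le> edge_cong N r e}"

definition heavy_users :: "nat \<Rightarrow> nat set set \<Rightarrow> (nat \<Rightarrow> nat list) \<Rightarrow> nat \<Rightarrow> nat set" where
  "heavy_users N E r t = {i. i < N \<and> path_edges (r i) \<inter> heavy_edges N E r t \<noteq> {}}"

locale max_game =
  fixes n :: nat and E :: "nat set set" and N :: nat
    and u v :: "nat \<Rightarrow> nat" and P :: "nat \<Rightarrow> nat list set"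
  assumes game: "routing_game n E N u v P"
begin

abbreviation "L \<equiv> Lmax N P"

lemma players: "1 \<le> N"
  and strategies_finite: "i < N \<Longrightarrow> finite (P i)"
  and strategies_nonempty: "i < N \<Longrightarrow> P i \<noteq> {}"
  and strategy_path: "i < N \<Longrightarrow> p \<in> P i \<Longrightarrow> is_path E (u i) (v i) p"
  using game unfolding routing_game_def by auto

lemma finite_edges: "finite E" and card_edges: "card E \<le> n ^ 2"
  using game simple_graph_finite_edges unfolding routing_game_def by auto

lemma strategy_edges: "i < N \<Longrightarrow> p \<in> P i \<Longrightarrow> path_edges p \<subseteq> E"
  using strategy_path unfolding is_path_def by blast

lemma plen_le_L: "i < N \<Longrightarrow> p \<in> P i \<Longrightarrow> plen p \<le> L"
  unfolding Lmax_def using strategies_finite by (intro Max_ge) auto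

lemma L_attained: obtains i p where "i < N" "p \<in> P i" "plen p = L"
proof -
  have "finite (\<Union>i<N. P i)" using strategies_finite by simp
  moreover have "(\<Union>i<N. P i) \<noteq> {}" using strategies_nonempty[of 0] players by auto
  ultimately have "L \<in> plen ` (\<Union>i<N. P i)"
    unfolding Lmax_def by (intro Max_in) simp_all
  with that show ?thesis by (elim imageE UN_E) (metis lessThan_iff)
qed

lemma routing_strategy: "r \<in> routings N P \<Longrightarrow> i < N \<Longrightarrow> r i \<in> P i"
  unfolding routings_def by (auto simp: PiE_iff)

lemma dilation_le_L: "r \<in> routings N P \<Longrightarrow> dilation N r \<le> L"
  unfolding dilation_def using plen_le_L routing_strategy by (intro Max.boundedI) auto

lemma edge_cong_le_congestion: "e \<in> E \<Longrightarrow> edge_cong N r e \<le> congestion N E r"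
  unfolding congestion_def using finite_edges by (intro Max_ge) auto

lemma optimum_attained:
  obtains s where "s \<in> routings N P" and "social_cost N E s = opt_social_cost N E P"
proof -
  have "finite (routings N P)"
    unfolding routings_def using strategies_finite by (intro finite_PiE) auto
  moreover have "routings N P \<noteq> {}"
    unfolding routings_def using strategies_nonempty by (auto simp: PiE_eq_empty_iff)
  ultimately have "opt_social_cost N E P \<in> social_cost N E ` routings N P"
    unfolding opt_social_cost_def by (intro Min_in) auto
  with that show ?thesis by auto
qed

(* If some path is nontrivial, some player must travel, so every routing costs >= 1. *)
lemma social_cost_pos:
  assumes "1 \<le> L" and "s \<in> routings N P"
  shows "1 \<le> social_cost N E s"
proof -
  obtain i p where i: "i < N" and p: "p \<in> P i" and "plen p = L" by (rule L_attained)
  with assms have "u i \<noteq> v i"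
    using is_path_endpoints_distinct strategy_path by metis
  then have "1 \<le> plen (s i)"
    using is_path_plen_pos strategy_path[OF i routing_strategy[OF assms(2) i]] by blast
  also have "\<dots> \<le> dilation N s" unfolding dilation_def using i by (intro Max_ge) auto
  finally show ?thesis by (simp add: social_cost_def)
qed

lemma social_cost_L_zero:
  assumes "L = 0" and "r \<in> routings N P"
  shows "social_cost N E r = 0"
proof -
  have "path_edges (r i) = {}" if "i < N" for i
    using card_path_edges_le_plen[of "r i"] plen_le_L[OF that routing_strategy[OF assms(2) that]]
      assms(1) finite_path_edges by simp
  then have "edge_cong N r e = 0" for e by (simp add: edge_cong_def)
  then show ?thesis
    using dilation_le_L[OF assms(2)] assms(1)
    by (simp add: social_cost_def congestion_def image_constant_conv)
qed

(* Step (1): at least t players on each heavy edge, at most L heavy edges per user. *)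
lemma heavy_edges_vs_users:
  assumes "r \<in> routings N P"
  shows "t * card (heavy_edges N E r t) \<le> L * card (heavy_users N E r t)"
proof -
  let ?A = "heavy_edges N E r t"
  have finA: "finite ?A" unfolding heavy_edges_def using finite_edges by simp
  have "t * card ?A = (\<Sum>e\<in>?A. t)" by simp
  also have "\<dots> \<le> (\<Sum>e\<in>?A. edge_cong N r e)" by (intro sum_mono) (simp add: heavy_edges_def)
  also have "\<dots> = (\<Sum>i<N. card (path_edges (r i) \<inter> ?A))" by (rule sum_edge_cong[OF finA])
  also have "\<dots> = (\<Sum>i\<in>heavy_users N E r t. card (path_edges (r i) \<inter> ?A))"
    by (rule sum.mono_neutral_right) (auto simp: heavy_users_def)
  also have "\<dots> \<le> (\<Sum>i\<in>heavy_users N E r t. L)"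
  proof (intro sum_mono)
    fix i assume "i \<in> heavy_users N E r t"
    then have i: "i < N" by (simp add: heavy_users_def)
    have "card (path_edges (r i) \<inter> ?A) \<le> card (path_edges (r i))"
      by (intro card_mono) (auto simp: finite_path_edges)
    also have "\<dots> \<le> plen (r i)" by (rule card_path_edges_le_plen)
    also have "\<dots> \<le> L" using plen_le_L[OF i routing_strategy[OF assms i]] .
    finally show "card (path_edges (r i) \<inter> ?A) \<le> L" .
  qed
  finally show ?thesis by (simp add: mult.commute)
qed

(* Step (2), the Nash condition: a heavy user would face load >= t - 1 on its
   alternative path s_i, so it is charged to a (t-1)-heavy edge of s_i. *)
lemma nash_alternative_heavy:
  assumes nash: "r \<in> nash_routings N P" and s: "s \<in> routings N P"
    and "L < t" and i: "i \<in> heavy_users N E r t"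
  obtains e where "e \<in> path_edges (s i)" and "e \<in> heavy_edges N E r (t - 1)"
proof -
  from i obtain e where i: "i < N" and e: "e \<in> path_edges (r i)" "t \<le> edge_cong N r e"
    by (auto simp: heavy_users_def heavy_edges_def)
  have si: "s i \<in> P i" using routing_strategy[OF s i] .
  let ?r' = "r(i := s i)"
  have "t \<le> player_cost N r i"
    using e edge_cong_le_player_cong[of e r i N] by (simp add: player_cost_def)
  also have "\<dots> \<le> player_cost N ?r' i"
    using nash i si unfolding nash_routings_def by auto
  finally have cong: "t \<le> player_cong N ?r' i"
    using plen_le_L[OF i si] \<open>L < t\<close> by (simp add: player_cost_def)
  then have "0 < player_cong N ?r' i" using \<open>L < t\<close> by linarith
  then obtain e' where e': "e' \<in> path_edges (s i)" "edge_cong N ?r' e' = player_cong N ?r' i"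
    by (metis player_cong_attained fun_upd_same)
  have "t - 1 \<le> edge_cong N r e'"
    using cong e'(2) edge_cong_update_le[of N r i "s i" e'] by simp
  moreover have "e' \<in> E" using strategy_edges[OF i si] e'(1) by auto
  ultimately show ?thesis using that e'(1) by (simp add: heavy_edges_def)
qed

(* Charging every heavy user to such an edge: each edge carries at most C(s) players of s. *)
lemma heavy_users_bound:
  assumes nash: "r \<in> nash_routings N P" and s: "s \<in> routings N P" and "L < t"
  shows "card (heavy_users N E r t) \<le> congestion N E s * card (heavy_edges N E r (t - 1))"
proof -
  let ?A = "heavy_edges N E r (t - 1)"
  let ?users = "\<lambda>e. {i. i < N \<and> e \<in> path_edges (s i)}"
  have "heavy_users N E r t \<subseteq> (\<Union>e\<in>?A. ?users e)"
  proof
    fix i assume hi: "i \<in> heavy_users N E r t"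
    then have "i < N" by (simp add: heavy_users_def)
    with nash_alternative_heavy[OF assms hi] show "i \<in> (\<Union>e\<in>?A. ?users e)" by blast
  qed
  then have "card (heavy_users N E r t) \<le> card (\<Union>e\<in>?A. ?users e)"
    by (intro card_mono) (auto intro: finite_subset[of _ "{..<N}"])
  also have "\<dots> \<le> (\<Sum>e\<in>?A. card (?users e))"
    by (rule card_UN_le) (use finite_edges in \<open>simp add: heavy_edges_def\<close>)
  also have "\<dots> \<le> (\<Sum>e\<in>?A. congestion N E s)"
    by (intro sum_mono) (simp add: heavy_edges_def edge_cong_le_congestion flip: edge_cong_def)
  finally show ?thesis by (simp add: mult.commute)
qed

lemma heavy_edges_doubling:
  assumes nash: "r \<in> nash_routings N P" and s: "s \<in> routings N P"
    and t: "L + 2 * L * congestion N E s < t"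
  shows "2 * card (heavy_edges N E r t) \<le> card (heavy_edges N E r (t - 1))"
proof -
  let ?K = "L * congestion N E s"
  have r: "r \<in> routings N P" using nash by (simp add: nash_routings_def)
  have main: "t * card (heavy_edges N E r t) \<le> ?K * card (heavy_edges N E r (t - 1))"
  proof -
    have "t * card (heavy_edges N E r t) \<le> L * card (heavy_users N E r t)"
      by (rule heavy_edges_vs_users[OF r])
    also have "\<dots> \<le> L * (congestion N E s * card (heavy_edges N E r (t - 1)))"
      using heavy_users_bound[OF nash s] t by (intro mult_le_mono2) simp
    finally show ?thesis by (simp add: mult.assoc)
  qed
  show ?thesis
  proof (cases "?K = 0")
    case True
    with main t show ?thesis by simp
  next
    case False
    have "(2 * ?K) * card (heavy_edges N E r t) \<le> t * card (heavy_edges N E r t)"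
      using t by (intro mult_le_mono1) simp
    with main have "?K * (2 * card (heavy_edges N E r t)) \<le> ?K * card (heavy_edges N E r (t - 1))"
      by (simp only: ac_simps)
    with False show ?thesis by simp
  qed
qed

lemma nash_congestion_bound:
  assumes "2 \<le> n" and nash: "r \<in> nash_routings N P" and s: "s \<in> routings N P"
  shows "real (congestion N E r) \<le> real (L + 2 * L * congestion N E s) + 4 * ln (real n)"
proof (cases "congestion N E r = 0")
  case False
  let ?C = "congestion N E r" and ?T = "L + 2 * L * congestion N E s"
  have "?C \<in> insert 0 (edge_cong N r ` E)"
    unfolding congestion_def using finite_edges by (intro Max_in) auto
  with False obtain e where "e \<in> E" and "edge_cong N r e = ?C" by auto
  then have "e \<in> heavy_edges N E r ?C" by (simp add: heavy_edges_def)
  then have start: "1 \<le> card (heavy_edges N E r ?C)"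
    using finite_edges by (auto simp: heavy_edges_def Suc_le_eq card_gt_0_iff)
  have bounded: "card (heavy_edges N E r t) \<le> n ^ 2" for t
    using card_mono[OF finite_edges, of "heavy_edges N E r t"] card_edges
    by (auto simp: heavy_edges_def)
  have "2 ^ (?C - ?T) \<le> n ^ 2"
    by (rule doubling_chain_bound[OF start heavy_edges_doubling[OF nash s] bounded])
  then have "real (?C - ?T) \<le> 4 * ln (real n)"
    using assms(1) by (intro exponent_le_ln) simp_all
  then show ?thesis by linarith
qed (use assms(1) in simp)

lemma nash_social_cost_bound:
  assumes n: "2 \<le> n" and nash: "r \<in> nash_routings N P"
  shows "real (social_cost N E r) \<le> 4 * (real L + ln (real n)) * real (opt_social_cost N E P)"
proof -
  have r: "r \<in> routings N P" using nash by (simp add: nash_routings_def)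
  obtain s where s: "s \<in> routings N P" and opt: "social_cost N E s = opt_social_cost N E P"
    by (rule optimum_attained)
  define OPT where "OPT = real (opt_social_cost N E P)"
  have ln_pos: "0 \<le> ln (real n)" using n by simp
  show ?thesis
  proof (cases "L = 0")
    case True
    then show ?thesis using social_cost_L_zero[OF True r] ln_pos by simp
  next
    case False
    have OPT1: "1 \<le> OPT" using social_cost_pos[of s] False s opt by (simp add: OPT_def)
    have Cs: "real (congestion N E s) \<le> OPT"
      using opt by (simp add: OPT_def social_cost_def)
    have L_le: "real L \<le> real L * OPT" and ln_le: "ln (real n) \<le> ln (real n) * OPT"
      using OPT1 ln_pos by (simp_all add: mult_le_cancel_left1)
    have "real (congestion N E r) \<le> real L + 2 * real L * OPT + 4 * ln (real n)"
      using nash_congestion_bound[OF n nash s] mult_left_mono[OF Cs, of "2 * real L"] by simp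
    also have "\<dots> \<le> 4 * (real L + ln (real n)) * OPT"
      using L_le ln_le by (simp add: algebra_simps)
    finally have "real (congestion N E r) \<le> 4 * (real L + ln (real n)) * OPT" .
    moreover have "real (dilation N r) \<le> 4 * (real L + ln (real n)) * OPT"
      using dilation_le_L[OF r] L_le ln_le ln_pos by (simp add: algebra_simps)
    ultimately show ?thesis by (simp add: social_cost_def OPT_def)
  qed
qed

end

theorem mainTheorem6:
  shows "\<exists>c::real. c > 0 \<and>
    (\<forall>n E N u v P. n \<ge> 2 \<longrightarrow> routing_game n E N u v P \<longrightarrow>
       (\<forall>r \<in> nash_routings N P.
          real (social_cost N E r)
            \<le> c * (real (Lmax N P) + ln (real n)) * real (opt_social_cost N E P)))"
proof (intro exI[of _ "4::real"] conjI allI impI ballI)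
  fix n E N u v P r
  assume "2 \<le> n" "routing_game n E N u v P" "r \<in> nash_routings N P"
  then show "real (social_cost N E r)
               \<le> 4 * (real (Lmax N P) + ln (real n)) * real (opt_social_cost N E P)"
    using max_game.nash_social_cost_bound[of n E N u v P] by (simp add: max_game_def)
qed simp

end
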